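(* Let $\mathbf{Y}=(Y_i)_{i=1}^4$ be an abstract scrambled $(0,2,3)$-net in base $2$. Then for every $\varepsilon>0$ there is $D\in\mathcal{D}^3_0$ such that \[ \frac{\mathbb{P}(Y_1,Y_2,Y_3\in D)}{\prod_{i=1}^3\mathbb{P}(Y_i\in D)}\ \ge\ \left(\frac43\right)^3-\varepsilon . \] In particular, $\gamma_{\mathcal{D}^3_0}(\mathbf{Y})\ge(4/3)^3=2.\overline{370}$.
   Context: An elementary interval in base $b$ of order $k$ is a set $\prod_{i=1}^d[k_ib^{-\ell_i},(k_i+1)b^{-\ell_i})\subseteq[0,1)^d$ with nonnegative integers $\ell_i$, $0\le k_i<b^{\ell_i}$, and volume $b^{-k}$. An $N$-point multiset in $[0,1)^d$, $N=b^m$, is a $(t,m,d)$-net in base $b$ if every elementary interval in base $b$ of order $m-t$ contains exactly $b^t$ of its points. Basic cubes are the sets $\prod_{j=1}^d[k_jb^{-(m-t)},(k_j+1)b^{-(m-t)})$, $k_j\in\{0,\dots,b^{m-t}-1\}$. A tuple $(Y_i)_{i=1}^N$ of random points in $[0,1)^d$ is an abstract scrambled $(t,m,d)$-net in base $b$ if: (i) almost surely it is a $(t,m,d)$-net in base $b$; (ii) $\mathbb{P}(Y_i\in C)=b^{-d(m-t)}$ for every $i$ and basic cube $C$; (iii) for all measurable $M$, nonempty $J\subseteq\{1,\dots,N\}$ and basic cubes $(C_j)_{j\in J}$ with $\mathbb{P}(\forall j\in J:Y_j\in C_j)>0$, $\mathbb{P}(\forall j\in J:Y_j\in M\mid\forall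 j\in J:Y_j\in C_j)=\prod_{j\in J}\lambda^d(M\cap C_j)/\lambda^d(C_j)$. $\mathcal{C}^d_0=\{[0,a)\mid a\in[0,1]^d\}$, $\mathcal{D}^d_0=\{B\setminus A\mid A,B\in\mathcal{C}^d_0\}$. For a random point set $\mathbf{X}=(X_n)_{n=1}^N$, $\gamma_{\mathcal{D}^d_0}(\mathbf{X})$ is the supremum over $S\in\mathcal{D}^d_0$ and nonempty $J\subseteq\{1,\dots,N\}$ of the ratios $\mathbb{P}(\bigcap_{j\in J}\{\mathbf{1}_S(X_j)=1\})/\prod_{j\in J}\mathbb{P}(\mathbf{1}_S(X_j)=1)$ and $\mathbb{P}(\bigcap_{j\in J}\{\mathbf{1}_S(X_j)=0\})/\prod_{j\in J}\mathbb{P}(\mathbf{1}_S(X_j)=0)$. *)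

theory Defs
  imports "HOL-Probability.Probability"
begin

text \<open>Points of [0,1)^d are vectors of type real^'n, d = CARD('n).
  Point sets (multisets) of N points are indexed families P :: nat => real^'n on {1..N}.\<close>

definition elementary_interval :: "nat \<Rightarrow> nat \<Rightarrow> (real^'n::finite) set \<Rightarrow> bool" where
  "elementary_interval b k E \<longleftrightarrow>
     (\<exists>(l::'n \<Rightarrow> nat) (kk::'n \<Rightarrow> nat).
        (\<forall>i. kk i < b ^ l i) \<and> (\<Sum>i\<in>UNIV. l i) = k \<and>
        E = {x. \<forall>i. real (kk i) / real b ^ l i \<le> x $ i \<and> x $ i < real (kk i + 1) / real b ^ l i})"

definition unit_cube :: "(real^'n::finite) set" where
  "unit_cube = {x. \<forall>i. 0 \<le> x $ i \<and> x $ i < 1}"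

definition is_tmd_net :: "nat \<Rightarrow> nat \<Rightarrow> nat \<Rightarrow> (nat \<Rightarrow> real^'n::finite) \<Rightarrow> bool" where
  "is_tmd_net b t m P \<longleftrightarrow>
     (\<forall>i\<in>{1..b^m}. P i \<in> unit_cube) \<and>
     (\<forall>E::(real^'n) set. elementary_interval b (m - t) E \<longrightarrow>
        card {i\<in>{1..b^m}. P i \<in> E} = b ^ t)"

definition basic_cube :: "nat \<Rightarrow> nat \<Rightarrow> nat \<Rightarrow> (real^'n::finite) set \<Rightarrow> bool" where
  "basic_cube b t m C \<longleftrightarrow>
     (\<exists>kk::'n \<Rightarrow> nat. (\<forall>j. kk j < b ^ (m - t)) \<and>
        C = {x. \<forall>j. real (kk j) / real b ^ (m - t) \<le> x $ j \<and>
                    x $ j < real (kk j + 1) / real b ^ (m - t)})"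

definition abstract_scrambled_net ::
    "'a measure \<Rightarrow> nat \<Rightarrow> nat \<Rightarrow> nat \<Rightarrow> (nat \<Rightarrow> 'a \<Rightarrow> real^'n::finite) \<Rightarrow> bool" where
  "abstract_scrambled_net M b t m Y \<longleftrightarrow>
     prob_space M \<and>
     (\<forall>i\<in>{1..b^m}. Y i \<in> borel_measurable M) \<and>
     (AE \<omega> in M. is_tmd_net b t m (\<lambda>i. Y i \<omega>)) \<and>
     (\<forall>i\<in>{1..b^m}. \<forall>C. basic_cube b t m C \<longrightarrow>
        measure M {\<omega>\<in>space M. Y i \<omega> \<in> C} = 1 / real b ^ (CARD('n) * (m - t))) \<and>
     (\<forall>A J Cs. A \<in> sets (lborel :: (real^'n) measure) \<longrightarrow> J \<subseteq> {1..b^m} \<longrightarrow> J \<noteq> {} \<longrightarrow>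
        (\<forall>j\<in>J. basic_cube b t m (Cs j)) \<longrightarrow>
        measure M {\<omega>\<in>space M. \<forall>j\<in>J. Y j \<omega> \<in> Cs j} > 0 \<longrightarrow>
        measure M {\<omega>\<in>space M. (\<forall>j\<in>J. Y j \<omega> \<in> A) \<and> (\<forall>j\<in>J. Y j \<omega> \<in> Cs j)}
          / measure M {\<omega>\<in>space M. \<forall>j\<in>J. Y j \<omega> \<in> Cs j}
        = (\<Prod>j\<in>J. measure lborel (A \<inter> Cs j) / measure lborel (Cs j)))"

definition anchored_box :: "real^'n::finite \<Rightarrow> (real^'n) set" where
  "anchored_box a = {x. \<forall>i. 0 \<le> x $ i \<and> x $ i < a $ i}"

definition C0 :: "(real^'n::finite) set set" where
  "C0 = {anchored_box a | a. \<forall>i. 0 \<le> a $ i \<and> a $ i \<le> 1}"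

definition D0 :: "(real^'n::finite) set set" where
  "D0 = {B - A | A B. A \<in> C0 \<and> B \<in> C0}"

text \<open>gamma_{D_0}(X) for X = (X 1, ..., X N); ratios as extended reals (a ratio with
  vanishing denominator is taken as 0 by the HOL convention x/0 = 0).\<close>
definition gamma_D0 :: "'a measure \<Rightarrow> nat \<Rightarrow> (nat \<Rightarrow> 'a \<Rightarrow> real^'n::finite) \<Rightarrow> ereal" where
  "gamma_D0 M N X =
     (SUP SJ \<in> {(S, J). S \<in> D0 \<and> J \<subseteq> {1..N} \<and> J \<noteq> {}}.
        max (ereal (measure M {\<omega>\<in>space M. \<forall>j\<in>snd SJ. X j \<omega> \<in> fst SJ}
                    / (\<Prod>j\<in>snd SJ. measure M {\<omega>\<in>space M. X j \<omega> \<in> fst SJ})))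
            (ereal (measure M {\<omega>\<in>space M. \<forall>j\<in>snd SJ. X j \<omega> \<notin> fst SJ}
                    / (\<Prod>j\<in>snd SJ. measure M {\<omega>\<in>space M. X j \<omega> \<notin> fst SJ}))))"

end

(* Take D = [0, 1/2 + d)^3 - [0, 1/2)^3, so that P(Y_i : D) = (1/2 + d)^3 - 1/8 = d (3/4 + 3d/2 + d^2).
   Condition on Y_4 lying in the corner cell [3/4, 1)^3, which has probability 1/64.  Since every
   elementary interval of order 2 contains exactly one point of the net, each of Y_1, Y_2, Y_3 then
   lies in a cell of side 1/4 with one coordinate in [1/2, 3/4) and the other two in [0, 1/2).  Such a
   cell meets D in a slab of relative volume 4d, and given the cells the points are independent and
   uniform, so P(Y_1, Y_2, Y_3 : D) >= (4d)^3 / 64 = d^3.  The ratio is therefore at least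
   (3/4 + 3d/2 + d^2)^(-3), which tends to (4/3)^3 as d tends to 0. *)

theory Submission
  imports Defs
begin

section \<open>Half-open boxes and grid cubes\<close>

lemma half_open_box_fmeasurable:
  "{x::real^'n::finite. \<forall>j. l j \<le> x$j \<and> x$j < u j} \<in> fmeasurable lborel"
proof (rule fmeasurableI2[OF fmeasurable_cbox])
  show "{x::real^'n. \<forall>j. l j \<le> x$j \<and> x$j < u j} \<subseteq> cbox (\<chi> j. l j) (\<chi> j. u j)"
    by (auto simp: mem_box_cart less_imp_le)
qed measurable

lemma measure_half_open_box:
  fixes l u :: "'n::finite \<Rightarrow> real"
  assumes "\<And>j. l j \<le> u j"
  shows "measure lborel {x::real^'n. \<forall>j. l j \<le> x$j \<and> x$j < u j} = (\<Prod>j\<in>UNIV. u j - l j)"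
proof -
  let ?H = "{x::real^'n. \<forall>j. l j \<le> x$j \<and> x$j < u j}"
  define a :: "real^'n" where "a = (\<chi> j. l j)"
  define b :: "real^'n" where "b = (\<chi> j. u j)"
  have "box a b \<subseteq> ?H" "?H \<subseteq> cbox a b"
    by (auto simp: mem_box_cart a_def b_def less_imp_le)
  then have "measure lborel (box a b) \<le> measure lborel ?H" "measure lborel ?H \<le> measure lborel (cbox a b)"
    using half_open_box_fmeasurable by (auto intro!: measure_mono_fmeasurable)
  moreover have "measure lborel (cbox a b) = (\<Prod>j\<in>UNIV. u j - l j)"
    using assms content_cbox_cart[of a b] by (simp add: a_def b_def interval_eq_empty_cart not_less)
  ultimately show ?thesis
    by (simp only: measure_lborel_box_eq measure_lborel_cbox_eq)
qed

lemma floor_eq_of_nat_iff: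
  fixes c x :: real
  assumes "0 < c"
  shows "\<lfloor>c * x\<rfloor> = int k \<longleftrightarrow> real k / c \<le> x \<and> x < real (k + 1) / c"
  using assms by (simp add: floor_eq_iff divide_le_eq less_divide_eq mult.commute add.commute)

definition grid_cube :: "nat \<Rightarrow> ('n::finite \<Rightarrow> nat) \<Rightarrow> (real^'n) set" where
  "grid_cube s g = {x. \<forall>j. real (g j) / s \<le> x$j \<and> x$j < real (g j + 1) / s}"

lemma grid_cube_fmeasurable: "grid_cube s g \<in> fmeasurable lborel"
  unfolding grid_cube_def by (rule half_open_box_fmeasurable)

lemma grid_cube_sets: "grid_cube s g \<in> sets borel"
  using fmeasurableD[OF grid_cube_fmeasurable] by simp

lemma measure_grid_cube:
  assumes "0 < s"
  shows "measure lborel (grid_cube s g :: (real^'n::finite) set) = (1 / s) ^ CARD('n)"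
proof -
  have "measure lborel (grid_cube s g) = (\<Prod>j\<in>UNIV. real (g j + 1) / s - real (g j) / s)"
    unfolding grid_cube_def by (rule measure_half_open_box) (simp add: divide_right_mono)
  also have "\<dots> = (\<Prod>j\<in>(UNIV::'n set). 1 / s)"
    by (simp add: diff_divide_distrib[symmetric])
  finally show ?thesis by simp
qed

lemma mem_grid_cube_iff_floor:
  assumes "0 < s"
  shows "x \<in> grid_cube s g \<longleftrightarrow> (\<forall>j. \<lfloor>s * x$j\<rfloor> = int (g j))"
  using assms by (simp add: grid_cube_def floor_eq_of_nat_iff)

lemma grid_cube_disjoint:
  assumes "0 < s" "g \<noteq> g'"
  shows "grid_cube s g \<inter> grid_cube s g' = {}"
  using assms by (auto simp: mem_grid_cube_iff_floor)

lemma mem_grid_cube_floor: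
  assumes "0 < s" "x \<in> unit_cube"
  shows "x \<in> grid_cube s (\<lambda>j. nat \<lfloor>s * x$j\<rfloor>)"
  using assms by (simp add: mem_grid_cube_iff_floor unit_cube_def)

lemma unit_cube_eq_Union_grid_cubes:
  assumes "0 < s"
  shows "unit_cube = (\<Union>g\<in>{g. \<forall>j. g j < s}. grid_cube s g)"
proof (intro set_eqI iffI)
  fix x :: "real^'n" assume x: "x \<in> unit_cube"
  then have "0 \<le> s * x$j" "s * x$j < s" for j
    using assms by (auto simp: unit_cube_def)
  then have "\<forall>j. nat \<lfloor>s * x$j\<rfloor> < s"
    using assms by (auto simp: floor_less_iff nat_less_iff)
  then show "x \<in> (\<Union>g\<in>{g. \<forall>j. g j < s}. grid_cube s g)"
    using mem_grid_cube_floor[OF assms x] by blast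
next
  fix x :: "real^'n" assume "x \<in> (\<Union>g\<in>{g. \<forall>j. g j < s}. grid_cube s g)"
  then obtain g where g: "\<forall>j. g j < s" "x \<in> grid_cube s g" by blast
  have "0 \<le> x$j \<and> x$j < 1" for j
  proof -
    have "real (g j + 1) \<le> real s"
      using g(1) by (metis Suc_eq_plus1 Suc_leI of_nat_le_iff)
    then have "real (g j + 1) / s \<le> 1"
      using assms by simp
    moreover have "0 \<le> real (g j) / s" by simp
    moreover have "real (g j) / s \<le> x$j \<and> x$j < real (g j + 1) / s"
      using g(2) by (simp add: grid_cube_def)
    ultimately show ?thesis by linarith
  qed
  then show "x \<in> unit_cube" by (simp add: unit_cube_def)
qed

lemma finite_grid_indices: "finite {g :: 'n::finite \<Rightarrow> nat. \<forall>j. g j < s}"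
proof -
  have "{g :: 'n \<Rightarrow> nat. \<forall>j. g j < s} = PiE UNIV (\<lambda>_. {..<s})"
    by (auto simp: PiE_UNIV_domain)
  then show ?thesis by (simp add: finite_PiE)
qed

lemma basic_cube_iff_grid_cube:
  "basic_cube b t m C \<longleftrightarrow> (\<exists>g. (\<forall>j. g j < b ^ (m - t)) \<and> C = grid_cube (b ^ (m - t)) g)"
  by (simp add: basic_cube_def grid_cube_def)

lemma unit_cube_sets: "unit_cube \<in> sets borel"
  unfolding unit_cube_def by measurable

lemma basic_cube_sets: "basic_cube b t m C \<Longrightarrow> C \<in> sets borel"
  by (auto simp: basic_cube_iff_grid_cube grid_cube_sets)

lemma measure_basic_cube:
  assumes "0 < b" "basic_cube b t m (C :: (real^'n::finite) set)"
  shows "measure lborel C = 1 / real b ^ (CARD('n) * (m - t))"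
  using assms by (auto simp: basic_cube_iff_grid_cube measure_grid_cube power_one_over
      simp flip: power_mult) (simp add: mult.commute)

section \<open>Marginals and cell-wise uniformity of abstract scrambled nets\<close>

locale scrambled_net =
  fixes M :: "'a measure" and b t m :: nat and Y :: "nat \<Rightarrow> 'a \<Rightarrow> real^'n::finite"
  assumes scrambled: "abstract_scrambled_net M b t m Y"
begin

sublocale prob_space M
  using scrambled by (simp add: abstract_scrambled_net_def)

lemma events_point_in:
  assumes "i \<in> {1..b^m}" "B \<in> sets borel"
  shows "{\<omega>\<in>space M. Y i \<omega> \<in> B} \<in> events"
proof -
  have "Y i \<in> borel_measurable M"
    using scrambled assms(1) by (simp add: abstract_scrambled_net_def)
  then show ?thesis
    using measurable_sets[OF _ assms(2)] by (simp add: vimage_def Int_def conj_commute)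
qed

lemma events_points_in:
  assumes "J \<subseteq> {1..b^m}" "\<And>j. j \<in> J \<Longrightarrow> B j \<in> sets borel"
  shows "{\<omega>\<in>space M. \<forall>j\<in>J. Y j \<omega> \<in> B j} \<in> events"
  using assms finite_subset[OF assms(1)]
  by (intro sets.sets_Collect_finite_All events_point_in) auto

lemma AE_is_net: "AE \<omega> in M. is_tmd_net b t m (\<lambda>i. Y i \<omega>)"
  using scrambled by (simp add: abstract_scrambled_net_def)

lemma prob_points_in_cubes_Int:
  assumes "A \<in> sets borel" "J \<subseteq> {1..b^m}" "J \<noteq> {}" "\<And>j. j \<in> J \<Longrightarrow> basic_cube b t m (C j)"
  shows "prob {\<omega>\<in>space M. \<forall>j\<in>J. Y j \<omega> \<in> A \<inter> C j}
       = prob {\<omega>\<in>space M. \<forall>j\<in>J. Y j \<omega> \<in> C j}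
         * (\<Prod>j\<in>J. measure lborel (A \<inter> C j) / measure lborel (C j))"
proof -
  let ?C = "{\<omega>\<in>space M. \<forall>j\<in>J. Y j \<omega> \<in> C j}"
  let ?AC = "{\<omega>\<in>space M. \<forall>j\<in>J. Y j \<omega> \<in> A \<inter> C j}"
  show ?thesis
  proof (cases "prob ?C = 0")
    case True
    have "?C \<in> events"
      using assms(2) basic_cube_sets[OF assms(4)] by (rule events_points_in)
    moreover have "?AC \<subseteq> ?C"
      by auto
    ultimately have "prob ?AC \<le> prob ?C"
      by (intro finite_measure_mono)
    then have "prob ?AC = 0"
      using True measure_nonneg[of M ?AC] by linarith
    then show ?thesis
      using True by simp
  next
    case False
    then have pos: "prob ?C > 0"
      using measure_nonneg[of M ?C] by linarith
    have "A \<in> sets (lborel :: (real^'n) measure)"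
      using assms(1) by simp
    then have "prob {\<omega>\<in>space M. (\<forall>j\<in>J. Y j \<omega> \<in> A) \<and> (\<forall>j\<in>J. Y j \<omega> \<in> C j)} / prob ?C
        = (\<Prod>j\<in>J. measure lborel (A \<inter> C j) / measure lborel (C j))"
      using scrambled assms(2-) pos unfolding abstract_scrambled_net_def by blast
    moreover have "{\<omega>\<in>space M. (\<forall>j\<in>J. Y j \<omega> \<in> A) \<and> (\<forall>j\<in>J. Y j \<omega> \<in> C j)} = ?AC"
      by auto
    ultimately show ?thesis
      using False by (simp add: divide_eq_eq mult.commute)
  qed
qed

lemma prob_point_in_basic_cube:
  assumes "0 < b" "i \<in> {1..b^m}" "basic_cube b t m C"
  shows "prob {\<omega>\<in>space M. Y i \<omega> \<in> C} = measure lborel C"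
proof -
  have "prob {\<omega>\<in>space M. Y i \<omega> \<in> C} = 1 / real b ^ (CARD('n) * (m - t))"
    using scrambled assms(2,3) unfolding abstract_scrambled_net_def by blast
  then show ?thesis
    using measure_basic_cube[OF assms(1,3)] by simp
qed

lemma prob_point_in_eq_lborel:
  assumes "0 < b" and i: "i \<in> {1..b^m}" and B: "B \<in> sets borel"
  shows "prob {\<omega>\<in>space M. Y i \<omega> \<in> B} = measure lborel (B \<inter> unit_cube)"
proof -
  define s where "s = b ^ (m - t)"
  define G where "G = {g :: 'n \<Rightarrow> nat. \<forall>j. g j < s}"
  have s: "0 < s" using assms by (simp add: s_def)
  have cube: "basic_cube b t m (grid_cube s g)" if "g \<in> G" for g
    using that by (auto simp: basic_cube_iff_grid_cube s_def G_def)
  have in_cube: "prob {\<omega>\<in>space M. Y i \<omega> \<in> B \<inter> grid_cube s g} = measure lborel (B \<inter> grid_cube s g)"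
    if "g \<in> G" for g
    using prob_points_in_cubes_Int[OF B, of "{i}" "\<lambda>_. grid_cube s g"] i cube[OF that] \<open>0 < b\<close>
      prob_point_in_basic_cube[OF assms(1) i cube[OF that]] measure_basic_cube[OF assms(1) cube[OF that]]
    by simp
  have "AE \<omega> in M. Y i \<omega> \<in> unit_cube"
    using AE_is_net by eventually_elim (use i in \<open>auto simp: is_tmd_net_def\<close>)
  then have "prob {\<omega>\<in>space M. Y i \<omega> \<in> B} = prob {\<omega>\<in>space M. Y i \<omega> \<in> B \<inter> unit_cube}"
    by (intro measure_eq_AE events_point_in i B sets.Int unit_cube_sets) (auto elim!: eventually_mono)
  also have "{\<omega>\<in>space M. Y i \<omega> \<in> B \<inter> unit_cube}
      = (\<Union>g\<in>G. {\<omega>\<in>space M. Y i \<omega> \<in> B \<inter> grid_cube s g})"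
    using unit_cube_eq_Union_grid_cubes[OF s] by (auto simp: G_def)
  also have "prob \<dots> = (\<Sum>g\<in>G. measure lborel (B \<inter> grid_cube s g))"
    using grid_cube_disjoint[OF s] finite_grid_indices in_cube events_point_in[OF i sets.Int[OF B grid_cube_sets]]
    by (subst finite_measure_finite_Union) (auto simp: G_def disjoint_family_on_def)
  also have "\<dots> = measure lborel (\<Union>g\<in>G. B \<inter> grid_cube s g)"
    using grid_cube_disjoint[OF s] finite_grid_indices B
      fmeasurable_Int_fmeasurable[OF grid_cube_fmeasurable, of B s]
    by (subst measure_finite_Union) (auto simp: G_def disjoint_family_on_def fmeasurable_def Int_commute less_top[symmetric])
  also have "(\<Union>g\<in>G. B \<inter> grid_cube s g) = B \<inter> unit_cube"
    using unit_cube_eq_Union_grid_cubes[OF s] by (auto simp: G_def)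
  finally show ?thesis .
qed

end

section \<open>Where the points of a (0,2,3)-net in base 2 can lie\<close>

lemma tmd_net_in_unit_cube:
  "is_tmd_net b t m P \<Longrightarrow> a \<in> {1..b^m} \<Longrightarrow> 0 \<le> P a $ i \<and> P a $ i < 1"
  by (auto simp: is_tmd_net_def unit_cube_def)

lemma tmd_net_same_cell:
  fixes P :: "nat \<Rightarrow> real^'n::finite"
  assumes net: "is_tmd_net b 0 m P" and "0 < b" and l: "(\<Sum>i\<in>UNIV. l i) = m"
    and a: "a \<in> {1..b^m}" and a': "a' \<in> {1..b^m}"
    and same: "\<And>i. \<lfloor>real b ^ l i * P a $ i\<rfloor> = \<lfloor>real b ^ l i * P a' $ i\<rfloor>"
  shows "a = a'"
proof -
  define kk where "kk i = nat \<lfloor>real b ^ l i * P a $ i\<rfloor>" for i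
  define E :: "(real^'n) set" where
    "E = {x. \<forall>i. real (kk i) / real b ^ l i \<le> x $ i \<and> x $ i < real (kk i + 1) / real b ^ l i}"
  have pos: "0 < real b ^ l i" for i
    using \<open>0 < b\<close> by simp
  have floor_a: "\<lfloor>real b ^ l i * P a $ i\<rfloor> = int (kk i)" for i
    using tmd_net_in_unit_cube[OF net a] pos[of i] by (simp add: kk_def)
  have "kk i < b ^ l i" for i
  proof -
    have "real b ^ l i * P a $ i < real b ^ l i"
      using tmd_net_in_unit_cube[OF net a] pos[of i] by simp
    then have "int (kk i) < int (b ^ l i)"
      unfolding floor_a[symmetric] by (simp add: floor_less_iff)
    then show ?thesis by simp
  qed
  then have "elementary_interval b (m - 0) E"
    unfolding elementary_interval_def E_def using l by auto
  then have "card {k\<in>{1..b^m}. P k \<in> E} = 1"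
    using net by (simp add: is_tmd_net_def)
  moreover have "P a \<in> E" "P a' \<in> E"
    using floor_a same pos by (simp_all add: E_def floor_eq_of_nat_iff)
  ultimately show ?thesis
    using a a' by (metis (no_types, lifting) card_1_singletonE mem_Collect_eq singletonD)
qed

lemma net_base2_quarter_unique:
  fixes P :: "nat \<Rightarrow> real^'n::finite"
  assumes net: "is_tmd_net 2 0 2 P" and a: "a \<in> {1..4}" and a': "a' \<in> {1..4}"
    and "3/4 \<le> P a $ j" "3/4 \<le> P a' $ j"
  shows "a = a'"
proof (rule tmd_net_same_cell[OF net, of "\<lambda>i. if i = j then 2 else 0"])
  have "\<lfloor>real 2 ^ (if i = j then 2 else 0) * P k $ i\<rfloor> = (if i = j then 3 else 0)"
    if "k \<in> {a, a'}" for k i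
    using tmd_net_in_unit_cube[OF net, of k i] that a a' assms(4,5) by (auto simp: floor_eq_iff)
  then show "\<lfloor>real 2 ^ (if i = j then 2 else 0) * P a $ i\<rfloor>
      = \<lfloor>real 2 ^ (if i = j then 2 else 0) * P a' $ i\<rfloor>" for i
    by simp
qed (use a a' in auto)

lemma net_base2_quadrant_unique:
  fixes P :: "nat \<Rightarrow> real^'n::finite"
  assumes net: "is_tmd_net 2 0 2 P" and a: "a \<in> {1..4}" and a': "a' \<in> {1..4}" and "j \<noteq> j'"
    and "P a $ j < 1/2 \<longleftrightarrow> P a' $ j < 1/2" "P a $ j' < 1/2 \<longleftrightarrow> P a' $ j' < 1/2"
  shows "a = a'"
proof (rule tmd_net_same_cell[OF net, of "\<lambda>i. if i = j \<or> i = j' then 1 else 0"])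
  show "(\<Sum>i\<in>UNIV. if i = j \<or> i = j' then 1 else 0) = (2::nat)"
    using \<open>j \<noteq> j'\<close> by (simp add: sum.If_cases Int_def Collect_disj_eq)
  have "\<lfloor>real 2 ^ (if i = j \<or> i = j' then 1 else 0) * P k $ i\<rfloor>
      = (if (i = j \<or> i = j') \<and> \<not> P k $ i < 1/2 then 1 else 0)" if "k \<in> {1..4}" for k i
    using tmd_net_in_unit_cube[OF net, of k i] that by (auto simp: floor_eq_iff)
  then show "\<lfloor>real 2 ^ (if i = j \<or> i = j' then 1 else 0) * P a $ i\<rfloor>
      = \<lfloor>real 2 ^ (if i = j \<or> i = j' then 1 else 0) * P a' $ i\<rfloor>" for i
    using a a' assms(5,6) by auto
qed (use a a' in auto)

lemma net_023_face_position:
  fixes P :: "nat \<Rightarrow> real^3"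
  assumes net: "is_tmd_net 2 0 2 P" and top: "\<And>j. 3/4 \<le> P 4 $ j" and i: "i \<in> {1,2,3}"
  shows "\<exists>j. 1/2 \<le> P i $ j \<and> P i $ j < 3/4 \<and> (\<forall>j'. j' \<noteq> j \<longrightarrow> P i $ j' < 1/2)"
proof -
  have below: "P k $ j < 3/4" if k: "k \<in> {1,2,3}" for k j
  proof (rule ccontr)
    assume "\<not> P k $ j < 3/4"
    then have "k = 4"
      using net_base2_quarter_unique[OF net _ _ _ top[of j], of k] k by force
    with k show False by simp
  qed
  have one_high: "P k $ j < 1/2 \<or> P k $ j' < 1/2" if k: "k \<in> {1,2,3}" and "j \<noteq> j'" for k j j'
  proof (rule ccontr)
    assume "\<not> (P k $ j < 1/2 \<or> P k $ j' < 1/2)"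
    then have "k = 4"
      using net_base2_quadrant_unique[OF net _ _ \<open>j \<noteq> j'\<close>, of k 4] top[of j] top[of j'] k by force
    with k show False by simp
  qed
  have "\<exists>j. 1/2 \<le> P i $ j"
  proof (rule ccontr)
    assume "\<nexists>j. 1/2 \<le> P i $ j"
    then have low: "P i $ j < 1/2" for j
      by (simp add: not_le)
    define k :: nat where "k = (if i = 1 then 2 else 1)"
    have k: "k \<in> {1,2,3}" "k \<noteq> i"
      by (auto simp: k_def)
    have same_quadrant: "k = i" if "j \<noteq> j'" "P k $ j < 1/2" "P k $ j' < 1/2" for j j'
      using net_base2_quadrant_unique[OF net _ _ that(1), of k i] that(2,3) low k(1) i by force
    have d: "(1::3) \<noteq> 2" "(1::3) \<noteq> 3" "(2::3) \<noteq> 3"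
      by simp_all
    have "k = i"
      using one_high[OF k(1) d(1)] one_high[OF k(1) d(2)] one_high[OF k(1) d(3)]
        same_quadrant[OF d(1)] same_quadrant[OF d(2)] same_quadrant[OF d(3)] by blast
    with k(2) show False ..
  qed
  then obtain j where j: "1/2 \<le> P i $ j" ..
  have "P i $ j' < 1/2" if "j' \<noteq> j" for j'
    using one_high[OF i, of j j'] that j by auto
  then show ?thesis
    using j below[OF i, of j] by blast
qed

(* Indices g of the cells grid_cube 4 g inside [0, 3/4)^n with exactly one coordinate in [1/2, 3/4). *)
definition face_cells :: "('n::finite \<Rightarrow> nat) set" where
  "face_cells = {g. \<exists>j. g j = 2 \<and> (\<forall>j'. j' \<noteq> j \<longrightarrow> g j' \<le> 1)}"

lemma face_cells_le_2:
  assumes "g \<in> face_cells"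
  shows "g i \<le> 2"
proof -
  obtain j where "g j = 2" "\<forall>j'. j' \<noteq> j \<longrightarrow> g j' \<le> 1"
    using assms unfolding face_cells_def by blast
  then show ?thesis by (cases "i = j") auto
qed

lemma floor_index_in_face_cells:
  fixes x :: "real^'n::finite"
  assumes "x \<in> unit_cube" "1/2 \<le> x$j" "x$j < 3/4" "\<And>j'. j' \<noteq> j \<Longrightarrow> x$j' < 1/2"
  shows "(\<lambda>j. nat \<lfloor>4 * x$j\<rfloor>) \<in> face_cells"
proof -
  have "\<lfloor>4 * x$j\<rfloor> = 2"
    using assms(2,3) by (simp add: floor_eq_iff)
  moreover have "\<lfloor>4 * x$j'\<rfloor> \<le> 1" if "j' \<noteq> j" for j'
    using assms(4)[OF that] by (simp add: floor_le_iff)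
  ultimately show ?thesis
    unfolding face_cells_def by (intro CollectI exI[of _ j]) (auto simp: nat_le_iff)
qed

section \<open>The shell between two anchored cubes\<close>

definition shell :: "real \<Rightarrow> (real^'n::finite) set" where
  "shell \<delta> = anchored_box (\<chi> _. 1/2 + \<delta>) - anchored_box (\<chi> _. 1/2)"

lemma anchored_box_in_C0: "(\<And>i. 0 \<le> a $ i \<and> a $ i \<le> 1) \<Longrightarrow> anchored_box a \<in> C0"
  unfolding C0_def by blast

lemma shell_in_D0:
  assumes "0 \<le> \<delta>" "\<delta> \<le> 1/2"
  shows "shell \<delta> \<in> D0"
proof -
  have "anchored_box (\<chi> _. 1/2 + \<delta>) \<in> C0" "anchored_box (\<chi> _. 1/2) \<in> C0"
    using assms by (auto intro!: anchored_box_in_C0)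
  then show ?thesis
    unfolding shell_def D0_def by blast
qed

lemma anchored_box_fmeasurable: "anchored_box a \<in> fmeasurable lborel"
  unfolding anchored_box_def by (rule half_open_box_fmeasurable)

lemma anchored_box_sets: "anchored_box a \<in> sets borel"
  using anchored_box_fmeasurable[THEN fmeasurableD] by simp

lemma anchored_box_mono: "(\<And>i. a $ i \<le> b $ i) \<Longrightarrow> anchored_box a \<subseteq> anchored_box b"
  unfolding anchored_box_def using less_le_trans by blast

lemma shell_sets: "shell \<delta> \<in> sets borel"
  unfolding shell_def by (intro sets.Diff anchored_box_sets)

lemma measure_anchored_box_const:
  "0 \<le> c \<Longrightarrow> measure lborel (anchored_box (\<chi> _. c) :: (real^'n::finite) set) = c ^ CARD('n)"
  using measure_half_open_box[of "\<lambda>_. 0" "\<lambda>_::'n. c"] by (simp add: anchored_box_def)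

lemma measure_shell:
  assumes "0 \<le> \<delta>"
  shows "measure lborel (shell \<delta> :: (real^'n::finite) set) = (1/2 + \<delta>) ^ CARD('n) - (1/2) ^ CARD('n)"
proof -
  let ?B = "\<lambda>c. anchored_box (\<chi> _. c) :: (real^'n) set"
  have "?B (1/2) \<subseteq> ?B (1/2 + \<delta>)"
    using assms by (intro anchored_box_mono) simp
  moreover have "emeasure lborel (?B (1/2 + \<delta>)) \<noteq> top"
    by (rule fmeasurableD2[OF anchored_box_fmeasurable])
  ultimately have "measure lborel (shell \<delta> :: (real^'n) set)
      = measure lborel (?B (1/2 + \<delta>)) - measure lborel (?B (1/2))"
    unfolding shell_def by (intro measure_Diff) (simp_all add: anchored_box_sets)
  then show ?thesis
    using assms by (simp add: measure_anchored_box_const)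
qed

lemma shell_subset_unit_cube:
  assumes "\<delta> \<le> 1/2"
  shows "shell \<delta> \<subseteq> unit_cube"
proof
  fix x assume "x \<in> shell \<delta>"
  then have x: "0 \<le> x$i \<and> x$i < 1/2 + \<delta>" for i
    by (simp add: shell_def anchored_box_def)
  show "x \<in> unit_cube"
    unfolding unit_cube_def
  proof (intro CollectI allI)
    fix i show "0 \<le> x$i \<and> x$i < 1"
      using x[of i] assms by linarith
  qed
qed

lemma shell_Int_face_cell_eq:
  fixes g :: "'n::finite \<Rightarrow> nat"
  assumes j: "g j = 2" "\<And>j'. j' \<noteq> j \<Longrightarrow> g j' \<le> 1" and "0 \<le> \<delta>" "\<delta> \<le> 1/4"
  shows "shell \<delta> \<inter> grid_cube 4 g
    = {x. \<forall>i. real (g i) / 4 \<le> x$i \<and> x$i < (if i = j then 1/2 + \<delta> else real (g i + 1) / 4)}"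
    (is "_ = {x. \<forall>i. _ \<le> x$i \<and> x$i < ?u i}")
proof (intro set_eqI iffI)
  fix x assume x: "x \<in> shell \<delta> \<inter> grid_cube 4 g"
  show "x \<in> {x. \<forall>i. real (g i) / 4 \<le> x$i \<and> x$i < ?u i}"
    using x by (auto simp: shell_def anchored_box_def grid_cube_def)
next
  fix x assume "x \<in> {x. \<forall>i. real (g i) / 4 \<le> x$i \<and> x$i < ?u i}"
  then have xi: "real (g i) / 4 \<le> x$i \<and> x$i < ?u i" for i
    by simp
  have "0 \<le> x$i \<and> x$i < 1/2 + \<delta> \<and> x$i < real (g i + 1) / 4" for i
  proof (cases "i = j")
    case True
    then have "1/2 \<le> x$i" "x$i < 1/2 + \<delta>" "real (g i + 1) / 4 = 3/4"
      using xi[of i] j(1) by simp_all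
    then show ?thesis using assms(4) by linarith
  next
    case False
    have "0 \<le> real (g i) / 4" "real (g i + 1) / 4 \<le> 1/2"
      using j(2)[OF False] by simp_all
    then show ?thesis using xi[of i] False assms(3) by auto
  qed
  then have "x \<in> anchored_box (\<chi> _. 1/2 + \<delta>)" "x \<in> grid_cube 4 g"
    using xi by (auto simp: anchored_box_def grid_cube_def)
  moreover have "x \<notin> anchored_box (\<chi> _. 1/2)"
    using xi[of j] j(1) unfolding anchored_box_def by (auto intro!: exI[of _ j])
  ultimately show "x \<in> shell \<delta> \<inter> grid_cube 4 g"
    by (simp add: shell_def)
qed

lemma measure_shell_Int_face_cell:
  assumes g: "g \<in> face_cells" and "0 \<le> \<delta>" "\<delta> \<le> 1/4"
  shows "measure lborel (shell \<delta> \<inter> grid_cube 4 g :: (real^'n::finite) set) = \<delta> * (1/4) ^ (CARD('n) - 1)"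
proof -
  obtain j where j: "g j = 2" "\<And>j'. j' \<noteq> j \<Longrightarrow> g j' \<le> 1"
    using g unfolding face_cells_def by blast
  have "card {i :: 'n. i \<noteq> j} = CARD('n) - 1"
  proof -
    have "{i. i \<noteq> j} = UNIV - {j}" by auto
    then show ?thesis by (simp add: card_Diff_singleton)
  qed
  have "measure lborel {x :: real^'n. \<forall>i. real (g i) / 4 \<le> x$i \<and> x$i < (if i = j then 1/2 + \<delta> else real (g i + 1) / 4)}
      = (\<Prod>i\<in>UNIV. (if i = j then 1/2 + \<delta> else real (g i + 1) / 4) - real (g i) / 4)"
    using j assms(2) by (intro measure_half_open_box) (auto simp: divide_right_mono)
  then have "measure lborel (shell \<delta> \<inter> grid_cube 4 g :: (real^'n) set)
      = (\<Prod>i\<in>UNIV. (if i = j then 1/2 + \<delta> else real (g i + 1) / 4) - real (g i) / 4)"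
    using shell_Int_face_cell_eq[of g j, OF j assms(2,3)] by simp
  also have "\<dots> = (\<Prod>i\<in>UNIV. if i = j then \<delta> else 1/4)"
    using j(1) by (intro prod.cong) (auto simp: diff_divide_distrib[symmetric])
  also have "\<dots> = \<delta> * (1/4) ^ (CARD('n) - 1)"
    using \<open>card {i. i \<noteq> j} = CARD('n) - 1\<close> by (simp add: prod.If_cases Int_def)
  finally show ?thesis .
qed

lemma tendsto_shell_ratio:
  "((\<lambda>\<delta>::real. (\<delta> / ((1/2 + \<delta>) ^ 3 - 1/8)) ^ 3) \<longlongrightarrow> (4/3) ^ 3) (at_right 0)"
proof -
  have eq: "\<delta> / ((1/2 + \<delta>) ^ 3 - 1/8) = 1 / (3/4 + 3/2 * \<delta> + \<delta>\<^sup>2)" if "0 < \<delta>" for \<delta> :: real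
  proof -
    have "(1/2 + \<delta>) ^ 3 - 1/8 = \<delta> * (3/4 + 3/2 * \<delta> + \<delta>\<^sup>2)"
      by (simp add: power3_eq_cube power2_eq_square algebra_simps)
    then show ?thesis
      using that by simp
  qed
  have "\<forall>\<^sub>F \<delta> in at_right (0::real).
      (\<delta> / ((1/2 + \<delta>) ^ 3 - 1/8)) ^ 3 = (1 / (3/4 + 3/2 * \<delta> + \<delta>\<^sup>2)) ^ 3"
    using eventually_at_right_less[of "0::real"] by (rule eventually_mono) (simp add: eq)
  moreover have "((\<lambda>\<delta>::real. (1 / (3/4 + 3/2 * \<delta> + \<delta>\<^sup>2)) ^ 3)
      \<longlongrightarrow> (1 / (3/4 + 3/2 * 0 + 0\<^sup>2)) ^ 3) (at_right 0)"
    by (intro tendsto_intros) auto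
  ultimately show ?thesis
    by (simp add: tendsto_cong)
qed

section \<open>Conditioning on the corner cell\<close>

lemma (in prob_space) prob_Int_eq_mult_by_partition:
  assumes "finite I" "disjoint_family_on F I" "\<And>c. c \<in> I \<Longrightarrow> F c \<in> events"
    and "E \<in> events" "T \<in> events" "AE \<omega> in M. \<omega> \<in> T \<longleftrightarrow> (\<exists>c\<in>I. \<omega> \<in> F c)"
    and "\<And>c. c \<in> I \<Longrightarrow> prob (E \<inter> F c) = r * prob (F c)"
  shows "prob (E \<inter> T) = r * prob T"
proof -
  have "prob (E \<inter> T) = prob (\<Union>c\<in>I. E \<inter> F c)"
    using assms(1,3-6) by (intro measure_eq_AE) (auto elim!: eventually_mono)
  also have "\<dots> = (\<Sum>c\<in>I. prob (E \<inter> F c))"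
    using assms(1-4) by (intro finite_measure_finite_Union) (auto simp: disjoint_family_on_def)
  also have "\<dots> = r * (\<Sum>c\<in>I. prob (F c))"
    using assms(7) by (simp add: sum_distrib_left)
  also have "(\<Sum>c\<in>I. prob (F c)) = prob (\<Union>c\<in>I. F c)"
    using assms(1-3) by (intro finite_measure_finite_Union[symmetric]) auto
  also have "\<dots> = prob T"
    using assms(1,3,5,6) by (intro measure_eq_AE) (auto elim!: eventually_mono)
  finally show ?thesis .
qed

(* The cell indices of Y 1, ..., Y 4 that can occur when Y 4 lies in the corner cell [3/4, 1)^3. *)
definition top_corner_configs :: "(nat \<Rightarrow> 3 \<Rightarrow> nat) set" where
  "top_corner_configs = (\<Pi>\<^sub>E j\<in>{1..4}. if j = 4 then {\<lambda>_. 3} else face_cells)"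

lemma finite_top_corner_configs: "finite top_corner_configs"
proof -
  have "face_cells \<subseteq> {g :: 3 \<Rightarrow> nat. \<forall>j. g j < 4}"
  proof
    fix g :: "3 \<Rightarrow> nat" assume "g \<in> face_cells"
    then have "g j < 4" for j
      using face_cells_le_2[of g j] by linarith
    then show "g \<in> {g. \<forall>j. g j < 4}" by simp
  qed
  then have "finite (face_cells :: (3 \<Rightarrow> nat) set)"
    using finite_grid_indices finite_subset by blast
  then show ?thesis
    unfolding top_corner_configs_def by (intro finite_PiE) auto
qed

lemma basic_cube_top_corner_config:
  assumes "c \<in> top_corner_configs" "j \<in> {1..4}"
  shows "basic_cube 2 0 2 (grid_cube 4 (c j))"
proof -
  have "c j k < 4" for k
    using assms face_cells_le_2[of "c j" k]
    by (cases "j = 4") (auto simp: top_corner_configs_def PiE_iff split: if_splits)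
  then show ?thesis
    by (auto simp: basic_cube_iff_grid_cube)
qed

lemma top_corner_config_cells:
  assumes "c \<in> top_corner_configs"
  shows "c 4 = (\<lambda>_. 3)" and "\<And>i. i \<in> {1,2,3} \<Longrightarrow> c i \<in> face_cells \<and> grid_cube 4 (c i) \<inter> grid_cube 4 (\<lambda>_. 3) = {}"
proof -
  have cj: "c j \<in> (if j = 4 then {\<lambda>_. 3} else face_cells)" if "j \<in> {1..4}" for j
    using assms that unfolding top_corner_configs_def by (rule PiE_mem)
  show "c 4 = (\<lambda>_. 3)"
    using cj[of 4] by simp
  fix i :: nat assume i: "i \<in> {1,2,3}"
  then have "c i \<in> face_cells"
    using cj[of i] by auto
  moreover have "(\<lambda>_::3. 3::nat) \<notin> face_cells"
    by (simp add: face_cells_def)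
  ultimately show "c i \<in> face_cells \<and> grid_cube 4 (c i) \<inter> grid_cube 4 (\<lambda>_. 3) = {}"
    using grid_cube_disjoint[OF zero_less_numeral, of "c i" "\<lambda>_. 3"] by metis
qed

lemma prod_shell_top_corner_ratio:
  fixes c :: "nat \<Rightarrow> 3 \<Rightarrow> nat"
  assumes c: "c \<in> top_corner_configs" and "0 \<le> \<delta>" "\<delta> \<le> 1/4"
  defines "A \<equiv> shell \<delta> \<union> grid_cube 4 (\<lambda>_. 3)"
  shows "(\<Prod>j\<in>{1..4}. measure lborel (A \<inter> grid_cube 4 (c j)) / measure lborel (grid_cube 4 (c j))) = (4 * \<delta>) ^ 3"
proof -
  have "measure lborel (A \<inter> grid_cube 4 (c i)) / measure lborel (grid_cube 4 (c i)) = 4 * \<delta>"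
    if "i \<in> {1,2,3}" for i
  proof -
    have "A \<inter> grid_cube 4 (c i) = shell \<delta> \<inter> grid_cube 4 (c i)"
      using top_corner_config_cells(2)[OF c that] by (auto simp: A_def)
    then show ?thesis
      using measure_shell_Int_face_cell[of "c i", OF _ assms(2,3)] top_corner_config_cells(2)[OF c that]
      by (simp add: measure_grid_cube power2_eq_square power3_eq_cube)
  qed
  moreover have "measure lborel (A \<inter> grid_cube 4 (c 4)) / measure lborel (grid_cube 4 (c 4)) = 1"
    using top_corner_config_cells(1)[OF c] by (simp add: A_def Int_absorb1 measure_grid_cube)
  moreover have "{1..4::nat} = {1,2,3,4}"
    by auto
  ultimately show ?thesis
    by (simp add: power3_eq_cube)
qed

locale scrambled_net_023 = scrambled_net M 2 0 2 Y
  for M :: "'a measure" and Y :: "nat \<Rightarrow> 'a \<Rightarrow> real^3"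
begin

lemma AE_top_corner_configs:
  "AE \<omega> in M. Y 4 \<omega> \<in> grid_cube 4 (\<lambda>_. 3) \<longleftrightarrow>
     (\<exists>c\<in>top_corner_configs. \<forall>j\<in>{1..4}. Y j \<omega> \<in> grid_cube 4 (c j))"
  using AE_is_net
proof eventually_elim
  case (elim \<omega>)
  let ?P = "\<lambda>i. Y i \<omega>"
  show ?case
  proof
    assume top: "Y 4 \<omega> \<in> grid_cube 4 (\<lambda>_. 3)"
    define c where "c = (\<lambda>j\<in>{1..4}. if j = 4 then (\<lambda>_. 3) else (\<lambda>k. nat \<lfloor>4 * ?P j $ k\<rfloor>))"
    have unit: "?P i \<in> unit_cube" if "i \<in> {1..4}" for i
      using elim that by (simp add: is_tmd_net_def)
    have top_coords: "\<And>k. 3/4 \<le> ?P 4 $ k"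
      using top by (simp add: grid_cube_def)
    have "(\<lambda>k. nat \<lfloor>4 * ?P i $ k\<rfloor>) \<in> face_cells" if "i \<in> {1..4}" "i \<noteq> 4" for i
    proof -
      have "i \<in> {1,2,3}"
        using that by auto
      then obtain j where "1/2 \<le> ?P i $ j" "?P i $ j < 3/4" "\<forall>j'. j' \<noteq> j \<longrightarrow> ?P i $ j' < 1/2"
        using net_023_face_position[OF elim top_coords] by blast
      then show ?thesis
        using floor_index_in_face_cells[OF unit[OF that(1)]] by blast
    qed
    then have "c \<in> top_corner_configs"
      by (auto simp: c_def top_corner_configs_def)
    moreover have "?P j \<in> grid_cube 4 (c j)" if "j \<in> {1..4}" for j
      using top mem_grid_cube_floor[of 4, OF _ unit[OF that]] that by (auto simp: c_def)
    ultimately show "\<exists>c\<in>top_corner_configs. \<forall>j\<in>{1..4}. ?P j \<in> grid_cube 4 (c j)"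
      by blast
  next
    assume "\<exists>c\<in>top_corner_configs. \<forall>j\<in>{1..4}. ?P j \<in> grid_cube 4 (c j)"
    then show "?P 4 \<in> grid_cube 4 (\<lambda>_. 3)"
      by (force simp: top_corner_configs_def)
  qed
qed

lemma prob_shell_Int_cells:
  assumes c: "c \<in> top_corner_configs" and "0 \<le> \<delta>" "\<delta> \<le> 1/4"
  shows "prob ({\<omega>\<in>space M. \<forall>i\<in>{1,2,3}. Y i \<omega> \<in> shell \<delta>}
               \<inter> {\<omega>\<in>space M. \<forall>j\<in>{1..4}. Y j \<omega> \<in> grid_cube 4 (c j)})
       = (4 * \<delta>) ^ 3 * prob {\<omega>\<in>space M. \<forall>j\<in>{1..4}. Y j \<omega> \<in> grid_cube 4 (c j)}"
proof -
  \<comment> \<open>Adding the corner cell makes one test set serve all four points.\<close>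
  let ?A = "shell \<delta> \<union> grid_cube 4 (\<lambda>_::3. 3::nat)"
  have "{1..4::nat} = {1,2,3,4}"
    by auto
  then have sets: "{\<omega>\<in>space M. \<forall>i\<in>{1,2,3}. Y i \<omega> \<in> shell \<delta>}
        \<inter> {\<omega>\<in>space M. \<forall>j\<in>{1..4}. Y j \<omega> \<in> grid_cube 4 (c j)}
      = {\<omega>\<in>space M. \<forall>j\<in>{1..4}. Y j \<omega> \<in> ?A \<inter> grid_cube 4 (c j)}"
    using top_corner_config_cells[OF c] by auto
  have "prob {\<omega>\<in>space M. \<forall>j\<in>{1..4}. Y j \<omega> \<in> ?A \<inter> grid_cube 4 (c j)}
      = prob {\<omega>\<in>space M. \<forall>j\<in>{1..4}. Y j \<omega> \<in> grid_cube 4 (c j)}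
        * (\<Prod>j\<in>{1..4}. measure lborel (?A \<inter> grid_cube 4 (c j)) / measure lborel (grid_cube 4 (c j)))"
    using basic_cube_top_corner_config[OF c] shell_sets grid_cube_sets
    by (intro prob_points_in_cubes_Int sets.Un) auto
  with prod_shell_top_corner_ratio[OF assms] show ?thesis
    unfolding sets by (simp add: mult.commute)
qed

lemma prob_top_corner_cell: "prob {\<omega>\<in>space M. Y 4 \<omega> \<in> grid_cube 4 (\<lambda>_. 3)} = 1/64"
proof -
  have "basic_cube 2 0 2 (grid_cube 4 (\<lambda>_::3. 3::nat))"
    unfolding basic_cube_iff_grid_cube by (intro exI[of _ "\<lambda>_. 3"]) simp
  then show ?thesis
    using prob_point_in_basic_cube[of 4] by (simp add: measure_grid_cube power_divide)
qed

lemma prob_shell_triple_ge: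
  assumes "0 \<le> \<delta>" "\<delta> \<le> 1/4"
  shows "\<delta> ^ 3 \<le> prob {\<omega>\<in>space M. \<forall>i\<in>{1,2,3}. Y i \<omega> \<in> shell \<delta>}"
proof -
  let ?E = "{\<omega>\<in>space M. \<forall>i\<in>{1,2,3}. Y i \<omega> \<in> shell \<delta>}"
  let ?T = "{\<omega>\<in>space M. Y 4 \<omega> \<in> grid_cube 4 (\<lambda>_. 3)}"
  let ?F = "\<lambda>c. {\<omega>\<in>space M. \<forall>j\<in>{1..4}. Y j \<omega> \<in> grid_cube 4 (c j)}"
  have E: "?E \<in> events"
    using shell_sets by (intro events_points_in) auto
  have disj: "disjoint_family_on ?F top_corner_configs"
    unfolding disjoint_family_on_def
  proof (intro ballI impI)
    fix c c' assume "c \<in> top_corner_configs" "c' \<in> top_corner_configs" "c \<noteq> c'"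
    then obtain j where j: "j \<in> {1..4}" "c j \<noteq> c' j"
      unfolding top_corner_configs_def by (metis PiE_ext)
    have "Y j \<omega> \<in> grid_cube 4 (c j) \<inter> grid_cube 4 (c' j)" if "\<omega> \<in> ?F c" "\<omega> \<in> ?F c'" for \<omega>
      using that j(1) by auto
    then show "?F c \<inter> ?F c' = {}"
      using grid_cube_disjoint[of 4, OF _ j(2)] by auto
  qed
  have F: "?F c \<in> events" for c
    using grid_cube_sets by (intro events_points_in) auto
  have T: "?T \<in> events"
    using grid_cube_sets by (intro events_point_in) auto
  have AE: "AE \<omega> in M. \<omega> \<in> ?T \<longleftrightarrow> (\<exists>c\<in>top_corner_configs. \<omega> \<in> ?F c)"
    by (rule AE_mp[OF AE_top_corner_configs AE_I2]) simp
  have "prob (?E \<inter> ?T) = (4 * \<delta>) ^ 3 * prob ?T"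
    using prob_shell_Int_cells[OF _ assms]
    by (rule prob_Int_eq_mult_by_partition[OF finite_top_corner_configs disj F E T AE])
  also have "\<dots> = \<delta> ^ 3"
    by (simp add: prob_top_corner_cell power_mult_distrib)
  finally have "prob (?E \<inter> ?T) = \<delta> ^ 3" .
  moreover have "prob (?E \<inter> ?T) \<le> prob ?E"
    using E by (intro finite_measure_mono) auto
  ultimately show ?thesis by simp
qed

lemma prob_shell:
  assumes "i \<in> {1..4}" "0 \<le> \<delta>" "\<delta> \<le> 1/2"
  shows "prob {\<omega>\<in>space M. Y i \<omega> \<in> shell \<delta>} = (1/2 + \<delta>) ^ 3 - 1/8"
proof -
  have "prob {\<omega>\<in>space M. Y i \<omega> \<in> shell \<delta>} = measure lborel (shell \<delta> \<inter> unit_cube :: (real^3) set)"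
    using assms(1) shell_sets by (intro prob_point_in_eq_lborel) auto
  also have "\<dots> = (1/2 + \<delta>) ^ 3 - 1/8"
  proof -
    have "shell \<delta> \<inter> unit_cube = (shell \<delta> :: (real^3) set)"
      using shell_subset_unit_cube[OF assms(3)] by blast
    then show ?thesis
      by (simp add: measure_shell[OF assms(2)] power_divide)
  qed
  finally show ?thesis .
qed

lemma shell_ratio_ge:
  assumes "0 < \<delta>" "\<delta> \<le> 1/4"
  shows "(\<delta> / ((1/2 + \<delta>) ^ 3 - 1/8)) ^ 3
    \<le> prob {\<omega>\<in>space M. Y 1 \<omega> \<in> shell \<delta> \<and> Y 2 \<omega> \<in> shell \<delta> \<and> Y 3 \<omega> \<in> shell \<delta>}
        / (\<Prod>i\<in>{1..3::nat}. prob {\<omega>\<in>space M. Y i \<omega> \<in> shell \<delta>})"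
proof -
  let ?p = "(1/2 + \<delta>) ^ 3 - 1/8"
  have "(1/2) ^ 3 < (1/2 + \<delta>) ^ 3"
    using assms(1) by (intro power_strict_mono) auto
  then have p: "0 < ?p"
    by (simp add: power_divide)
  have "(\<Prod>i\<in>{1..3::nat}. prob {\<omega>\<in>space M. Y i \<omega> \<in> shell \<delta>}) = ?p ^ 3"
    using assms by (simp add: prob_shell)
  moreover have "{\<omega>\<in>space M. Y 1 \<omega> \<in> shell \<delta> \<and> Y 2 \<omega> \<in> shell \<delta> \<and> Y 3 \<omega> \<in> shell \<delta>}
      = {\<omega>\<in>space M. \<forall>i\<in>{1,2,3}. Y i \<omega> \<in> shell \<delta>}"
    by auto
  moreover have "(\<delta> / ?p) ^ 3 \<le> prob {\<omega>\<in>space M. \<forall>i\<in>{1,2,3}. Y i \<omega> \<in> shell \<delta>} / ?p ^ 3"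
    unfolding power_divide using prob_shell_triple_ge[of \<delta>] assms p
    by (intro divide_right_mono) auto
  ultimately show ?thesis
    by simp
qed

lemma exists_D0_ratio_ge:
  assumes "0 < \<epsilon>"
  shows "\<exists>D\<in>D0. (4/3) ^ 3 - \<epsilon>
    \<le> prob {\<omega>\<in>space M. Y 1 \<omega> \<in> D \<and> Y 2 \<omega> \<in> D \<and> Y 3 \<omega> \<in> D}
        / (\<Prod>i\<in>{1..3::nat}. prob {\<omega>\<in>space M. Y i \<omega> \<in> D})"
proof -
  have "\<forall>\<^sub>F \<delta> in at_right 0. (4/3) ^ 3 - \<epsilon> < (\<delta> / ((1/2 + \<delta>) ^ 3 - 1/8)) ^ 3"
    using order_tendstoD(1)[OF tendsto_shell_ratio] assms by simp
  from eventually_happens[OF eventually_conj[OF this eventually_at_right_real[of 0 "1/4"]]]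
  obtain \<delta> where "(4/3) ^ 3 - \<epsilon> < (\<delta> / ((1/2 + \<delta>) ^ 3 - 1/8)) ^ 3" "0 < \<delta>" "\<delta> < 1/4"
    by auto
  then show ?thesis
    using shell_ratio_ge[of \<delta>] shell_in_D0[of \<delta>] by (intro bexI[of _ "shell \<delta>"]) auto
qed

end

lemma gamma_D0_ge_ratio:
  assumes "S \<in> D0" "J \<subseteq> {1..N}" "J \<noteq> {}"
  shows "ereal (measure M {\<omega>\<in>space M. \<forall>j\<in>J. X j \<omega> \<in> S}
      / (\<Prod>j\<in>J. measure M {\<omega>\<in>space M. X j \<omega> \<in> S})) \<le> gamma_D0 M N X"
proof -
  have SJ: "(S, J) \<in> {(S, J). S \<in> D0 \<and> J \<subseteq> {1..N} \<and> J \<noteq> {}}"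
    using assms by simp
  show ?thesis
    unfolding gamma_D0_def by (rule order_trans[OF _ SUP_upper[OF SJ]]) simp
qed

lemma gamma_D0_ge_of_approx:
  assumes "\<And>\<epsilon>. 0 < \<epsilon> \<Longrightarrow> \<exists>S\<in>D0. c - \<epsilon> \<le> measure M {\<omega>\<in>space M. \<forall>j\<in>J. X j \<omega> \<in> S}
                                / (\<Prod>j\<in>J. measure M {\<omega>\<in>space M. X j \<omega> \<in> S})"
    and "J \<subseteq> {1..N}" "J \<noteq> {}"
  shows "ereal c \<le> gamma_D0 M N X"
proof (rule ereal_le_epsilon2)
  fix \<epsilon> :: real assume "0 < \<epsilon>"
  then obtain S where S: "S \<in> D0"
    and "c - \<epsilon> \<le> measure M {\<omega>\<in>space M. \<forall>j\<in>J. X j \<omega> \<in> S}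
                   / (\<Prod>j\<in>J. measure M {\<omega>\<in>space M. X j \<omega> \<in> S})"
    using assms(1) by blast
  then have "ereal c \<le> ereal (measure M {\<omega>\<in>space M. \<forall>j\<in>J. X j \<omega> \<in> S}
      / (\<Prod>j\<in>J. measure M {\<omega>\<in>space M. X j \<omega> \<in> S})) + ereal \<epsilon>"
    by simp
  also have "\<dots> \<le> gamma_D0 M N X + ereal \<epsilon>"
    using gamma_D0_ge_ratio[OF S assms(2,3)] by (rule add_right_mono)
  finally show "ereal c \<le> gamma_D0 M N X + ereal \<epsilon>" .
qed

theorem proposition3p9:
  fixes M :: "'a measure" and Y :: "nat \<Rightarrow> 'a \<Rightarrow> real^3"
  assumes "abstract_scrambled_net M 2 0 2 Y"
  shows "(\<forall>\<epsilon>>0. \<exists>D\<in>(D0 :: (real^3) set set).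
            measure M {\<omega>\<in>space M. Y 1 \<omega> \<in> D \<and> Y 2 \<omega> \<in> D \<and> Y 3 \<omega> \<in> D}
              / (\<Prod>i\<in>{1..3::nat}. measure M {\<omega>\<in>space M. Y i \<omega> \<in> D})
            \<ge> (4/3)^3 - \<epsilon>)
         \<and> gamma_D0 M 4 Y \<ge> ereal ((4/3)^3)"
proof -
  interpret scrambled_net_023 M Y
    by unfold_locales (rule assms)
  have "{1..3::nat} = {1,2,3}"
    by auto
  then have sets: "{\<omega>\<in>space M. \<forall>j\<in>{1..3::nat}. Y j \<omega> \<in> D}
      = {\<omega>\<in>space M. Y 1 \<omega> \<in> D \<and> Y 2 \<omega> \<in> D \<and> Y 3 \<omega> \<in> D}" for D :: "(real^3) set"
    by auto
  have "\<exists>D\<in>D0. (4/3) ^ 3 - \<epsilon> \<le> prob {\<omega>\<in>space M. \<forall>j\<in>{1..3::nat}. Y j \<omega> \<in> D}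
                                / (\<Prod>j\<in>{1..3}. prob {\<omega>\<in>space M. Y j \<omega> \<in> D})" if "0 < \<epsilon>" for \<epsilon>
    unfolding sets by (rule exists_D0_ratio_ge[OF that])
  then have "ereal ((4/3) ^ 3) \<le> gamma_D0 M 4 Y"
    by (rule gamma_D0_ge_of_approx) auto
  with exists_D0_ratio_ge show ?thesis
    by blast
qed

end
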